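(* Let $C=p_r\dots p_s$ be a configuration of g-2PATH of Type II having free left hand, with $r<0$. Let $j_0$ be the smallest integer $j$ with $0\le j\le s$ such that $W(r,j)$ is finite. Then $C$ satisfies the condition of noninterference of extensions (CNI) if and only if $\mathrm{NI}(r+1,j_0)$ holds.
   Context: Positions are elements of $\mathbb{Z}^2$; with $\epsilon_0=(1,0),\epsilon_1=(0,1),\epsilon_2=(-1,0),\epsilon_3=(0,-1)$, positions $p,p'$ are adjacent if $p'-p$ is some $\epsilon_i$. A configuration of g-2PATH is a sequence $C=p_r\dots p_s$ ($r\le0\le s$) of positions with $p_0=(0,0)$, consecutive positions adjacent, all positions distinct, and $p_l,p_m$ not adjacent whenever $|l-m|\ge2$. For $p\in C$, $\mathrm{bc}_C(p)=(b_0,\dots,b_3)$ with $b_i=1$ iff $p+\epsilon_i\in C$. For $r\le i\le0\le j\le s$: $W(i,j)$ is the set of pairs $(x_0,x_1)$ of finite, possibly empty, sequences of positions such that $x_0p_i\dots p_jx_1$ is a configuration $C'$ of g-2PATH (general at $p_0$) with $\mathrm{bc}_{C'}(p_l)=\mathrm{bc}_C(p_l)$ for $i\le l\le j$; $U(i,j)$, $V(i,j)$ are the sets of first, resp. second, components of its elements; $f(i,j)=\sup\{|x_0|:x_0\in U(i,j)\}$, $g(i,j)=\sup\{|x_1|:x_1\in V(i,j)\}$ (possibly $\infty$). $\mathrm{NI}(i,j)$ means $W(i,j)=U(i,j)\times V(i,j)$. $I=\{(i,j): r\le i-1,\ W(i,j)$ infinite, $W(i-1,j)$ finite$\}$, $J=\{(i,j):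 j+1\le s,\ W(i,j)$ infinite, $W(i,j+1)$ finite$\}$, $K=\{(i,j): W(i,j)$ finite$\}$. $C$ satisfies CNI if $\mathrm{NI}(i,j)$ holds for all $(i,j)\in I\cup J\cup K$. The left hand of $C$ is free if $r=0$ or ($r<0$ and $f(r+1,s)=\infty$), closed otherwise; the right hand is free if $s=0$ or ($s>0$ and $g(r,s-1)=\infty$), closed otherwise. $C$ is of Type II if exactly one hand is free. *)

theory Defs
  imports Main "HOL-Library.Extended_Nat"
begin

type_synonym pos = "int \<times> int"

definition eps :: "nat \<Rightarrow> pos" where
  "eps k = (if k = 0 then (1,0) else if k = 1 then (0,1) else if k = 2 then (-1,0) else (0,-1))"

definition padd :: "pos \<Rightarrow> pos \<Rightarrow> pos" where
  "padd p q = (fst p + fst q, snd p + snd q)"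

definition adjacent :: "pos \<Rightarrow> pos \<Rightarrow> bool" where
  "adjacent p p' \<longleftrightarrow> (\<exists>k<4. p' = padd p (eps k))"

definition path_ok :: "pos list \<Rightarrow> bool" where
  "path_ok xs \<longleftrightarrow> distinct xs
     \<and> (\<forall>k. Suc k < length xs \<longrightarrow> adjacent (xs ! k) (xs ! Suc k))
     \<and> (\<forall>l m. l < length xs \<longrightarrow> m < length xs \<longrightarrow> l + 2 \<le> m \<longrightarrow> \<not> adjacent (xs ! l) (xs ! m))"

definition seg :: "(int \<Rightarrow> pos) \<Rightarrow> int \<Rightarrow> int \<Rightarrow> pos list" where
  "seg p i j = map p [i..j]"

definition config :: "int \<Rightarrow> int \<Rightarrow> (int \<Rightarrow> pos) \<Rightarrow> bool" where
  "config r s p \<longleftrightarrow> r \<le> 0 \<and> 0 \<le> s \<and> p 0 = (0,0) \<and> path_ok (seg p r s)"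

definition bc :: "pos set \<Rightarrow> pos \<Rightarrow> bool list" where
  "bc S q = map (\<lambda>k. padd q (eps k) \<in> S) [0..<4]"

text \<open>W(i,j) for the configuration p_r ... p_s. Since i \<le> 0 \<le> j, the sequence
  x0 p_i ... p_j x1 (indexed so that p_0 keeps index 0) is a configuration
  iff it satisfies the path conditions.\<close>
definition W :: "int \<Rightarrow> int \<Rightarrow> (int \<Rightarrow> pos) \<Rightarrow> int \<Rightarrow> int \<Rightarrow> (pos list \<times> pos list) set" where
  "W r s p i j = {(x0, x1). path_ok (x0 @ seg p i j @ x1)
      \<and> (\<forall>l\<in>{i..j}. bc (set (x0 @ seg p i j @ x1)) (p l) = bc (set (seg p r s)) (p l))}"

definition U :: "int \<Rightarrow> int \<Rightarrow> (int \<Rightarrow> pos) \<Rightarrow> int \<Rightarrow> int \<Rightarrow> pos list set" where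
  "U r s p i j = fst ` W r s p i j"

definition V :: "int \<Rightarrow> int \<Rightarrow> (int \<Rightarrow> pos) \<Rightarrow> int \<Rightarrow> int \<Rightarrow> pos list set" where
  "V r s p i j = snd ` W r s p i j"

definition f :: "int \<Rightarrow> int \<Rightarrow> (int \<Rightarrow> pos) \<Rightarrow> int \<Rightarrow> int \<Rightarrow> enat" where
  "f r s p i j = Sup ((\<lambda>x. enat (length x)) ` U r s p i j)"

definition g :: "int \<Rightarrow> int \<Rightarrow> (int \<Rightarrow> pos) \<Rightarrow> int \<Rightarrow> int \<Rightarrow> enat" where
  "g r s p i j = Sup ((\<lambda>x. enat (length x)) ` V r s p i j)"

definition NI :: "int \<Rightarrow> int \<Rightarrow> (int \<Rightarrow> pos) \<Rightarrow> int \<Rightarrow> int \<Rightarrow> bool" where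
  "NI r s p i j \<longleftrightarrow> W r s p i j = U r s p i j \<times> V r s p i j"

definition Iset :: "int \<Rightarrow> int \<Rightarrow> (int \<Rightarrow> pos) \<Rightarrow> (int \<times> int) set" where
  "Iset r s p = {(i,j). r \<le> i - 1 \<and> i \<le> 0 \<and> 0 \<le> j \<and> j \<le> s
      \<and> infinite (W r s p i j) \<and> finite (W r s p (i - 1) j)}"

definition Jset :: "int \<Rightarrow> int \<Rightarrow> (int \<Rightarrow> pos) \<Rightarrow> (int \<times> int) set" where
  "Jset r s p = {(i,j). r \<le> i \<and> i \<le> 0 \<and> 0 \<le> j \<and> j + 1 \<le> s
      \<and> infinite (W r s p i j) \<and> finite (W r s p i (j + 1))}"

definition Kset :: "int \<Rightarrow> int \<Rightarrow> (int \<Rightarrow> pos) \<Rightarrow> (int \<times> int) set" where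
  "Kset r s p = {(i,j). r \<le> i \<and> i \<le> 0 \<and> 0 \<le> j \<and> j \<le> s \<and> finite (W r s p i j)}"

definition CNI :: "int \<Rightarrow> int \<Rightarrow> (int \<Rightarrow> pos) \<Rightarrow> bool" where
  "CNI r s p \<longleftrightarrow> (\<forall>(i,j) \<in> Iset r s p \<union> Jset r s p \<union> Kset r s p. NI r s p i j)"

definition left_free :: "int \<Rightarrow> int \<Rightarrow> (int \<Rightarrow> pos) \<Rightarrow> bool" where
  "left_free r s p \<longleftrightarrow> r = 0 \<or> (r < 0 \<and> f r s p (r + 1) s = \<infinity>)"

definition right_free :: "int \<Rightarrow> int \<Rightarrow> (int \<Rightarrow> pos) \<Rightarrow> bool" where
  "right_free r s p \<longleftrightarrow> s = 0 \<or> (s > 0 \<and> g r s p r (s - 1) = \<infinity>)"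

definition type_II :: "int \<Rightarrow> int \<Rightarrow> (int \<Rightarrow> pos) \<Rightarrow> bool" where
  "type_II r s p \<longleftrightarrow> (left_free r s p \<noteq> right_free r s p)"

end

theory Submission
  imports Defs
begin

text \<open>Since r < 0, the position p_r is an endpoint of C whose only neighbour on C is p_(r+1).
  Preserving bc(p_r) therefore forbids any left extension x_0: every W(r,j) has only empty left
  components, so NI(r,j) holds, and W(r,s) = {([],[])} is finite.  A free left hand makes W(r+1,s)
  infinite, and it injects into every W(i,j) with r < i, so among the pairs of I, J and K with i > r
  only the pairs (r+1,j) of I with W(r,j) finite, i.e. with j \<ge> j_0, remain.  Finally
  NI(r+1,j_0) propagates to NI(r+1,j) for j \<ge> j_0: on a path, a position that has a predecessor is
  not adjacent to anything before that predecessor, so the constraints at p_l for l > j_0 do not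
  see x_0.\<close>

lemma Least_int_bounded_below:
  fixes P :: "int \<Rightarrow> bool"
  assumes "P k" and "\<And>j. P j \<Longrightarrow> a \<le> j"
  shows "P (LEAST j. P j)" and "\<And>j. P j \<Longrightarrow> (LEAST j. P j) \<le> j"
proof -
  define S where "S = {j. a \<le> j \<and> j \<le> k \<and> P j}"
  have "finite S" unfolding S_def by (rule finite_subset[of _ "{a..k}"]) auto
  moreover have "k \<in> S" using assms unfolding S_def by auto
  ultimately have Min: "Min S \<in> S" by (intro Min_in) auto
  have Min_le: "Min S \<le> j" if "P j" for j
  proof (cases "j \<le> k")
    case True
    then have "j \<in> S" using that assms(2) unfolding S_def by auto
    then show ?thesis using \<open>finite S\<close> by simp
  next
    case False
    then show ?thesis using Min unfolding S_def by auto
  qed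
  have "(LEAST j. P j) = Min S"
    using Min Min_le unfolding S_def by (intro Least_equality) auto
  then show "P (LEAST j. P j)" and "\<And>j. P j \<Longrightarrow> (LEAST j. P j) \<le> j"
    using Min Min_le unfolding S_def by auto
qed

lemma adjacent_iff: "adjacent p q \<longleftrightarrow> \<bar>fst q - fst p\<bar> + \<bar>snd q - snd p\<bar> = 1"
proof -
  obtain a b c d :: int where pq: "p = (a, b)" "q = (c, d)" by fastforce
  have "k < 4 \<longleftrightarrow> k = 0 \<or> k = 1 \<or> k = 2 \<or> k = (3::nat)" for k by arith
  then have "adjacent p q \<longleftrightarrow> (\<exists>k\<in>{0, 1, 2, 3}. q = padd p (eps k))"
    unfolding adjacent_def by auto
  also have "\<dots> \<longleftrightarrow>
      (c, d) = (a + 1, b) \<or> (c, d) = (a, b + 1) \<or> (c, d) = (a - 1, b) \<or> (c, d) = (a, b - 1)"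
    by (simp add: pq padd_def eps_def)
  also have "\<dots> \<longleftrightarrow> \<bar>c - a\<bar> + \<bar>d - b\<bar> = 1" by (simp add: abs_if) arith
  finally show ?thesis by (simp add: pq)
qed

lemma adjacent_sym: "adjacent p q \<Longrightarrow> adjacent q p"
  by (simp add: adjacent_iff abs_minus_commute)

lemma not_adjacent_self: "\<not> adjacent p p"
  by (simp add: adjacent_iff)

lemma path_ok_rev: "path_ok (rev xs) \<longleftrightarrow> path_ok xs"
proof -
  have "path_ok (rev xs)" if "path_ok xs" for xs :: "pos list"
  proof -
    let ?n = "length xs"
    have "adjacent (rev xs ! k) (rev xs ! Suc k)" if "Suc k < ?n" for k
    proof -
      have "adjacent (xs ! (?n - Suc (Suc k))) (xs ! Suc (?n - Suc (Suc k)))"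
        using \<open>path_ok xs\<close> that unfolding path_ok_def by simp
      then have "adjacent (rev xs ! Suc k) (rev xs ! k)"
        using that by (simp add: rev_nth Suc_diff_Suc)
      then show ?thesis by (rule adjacent_sym)
    qed
    moreover have "\<not> adjacent (rev xs ! l) (rev xs ! m)"
      if "l < ?n" "m < ?n" "l + 2 \<le> m" for l m
    proof
      assume "adjacent (rev xs ! l) (rev xs ! m)"
      then have "adjacent (xs ! (?n - Suc l)) (xs ! (?n - Suc m))"
        using that by (simp add: rev_nth)
      then have "adjacent (xs ! (?n - Suc m)) (xs ! (?n - Suc l))"
        by (rule adjacent_sym)
      moreover have "?n - Suc m < ?n" "?n - Suc l < ?n" "?n - Suc m + 2 \<le> ?n - Suc l"
        using that by linarith+
      ultimately show False using \<open>path_ok xs\<close> unfolding path_ok_def by blast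
    qed
    ultimately show ?thesis using \<open>path_ok xs\<close> unfolding path_ok_def by simp
  qed
  from this[of xs] this[of "rev xs"] show ?thesis by auto
qed

lemma path_ok_adjacent_nth:
  assumes "path_ok xs" "a < length xs" "b < length xs" "adjacent (xs ! a) (xs ! b)"
  shows "a = Suc b \<or> b = Suc a"
proof -
  have "a \<noteq> b" using assms(4) not_adjacent_self by metis
  moreover have "\<not> a + 2 \<le> b"
    using assms unfolding path_ok_def by blast
  moreover have "\<not> b + 2 \<le> a"
    using assms adjacent_sym[OF assms(4)] unfolding path_ok_def by blast
  ultimately show ?thesis by linarith
qed

lemma bc_eq_neighbour_mem:
  assumes "bc S q = bc T q" "adjacent q q'" "q' \<in> S"
  shows "q' \<in> T"
proof -
  obtain k where "k < 4" "q' = padd q (eps k)" using assms(2) unfolding adjacent_def by blast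
  moreover have "bc S q ! k = bc T q ! k" using assms(1) by simp
  ultimately show ?thesis using assms(3) by (simp add: bc_def)
qed

text \<open>A predecessor of the endpoint a would be a neighbour of a on the original path, hence b.\<close>
lemma path_ok_endpoint_no_predecessor:
  assumes L: "path_ok (x0 @ a # b # M)" and C: "path_ok (a # b # C)"
    and nbrs: "\<And>q. adjacent a q \<Longrightarrow> q \<in> set (x0 @ a # b # M) \<Longrightarrow> q \<in> set (a # b # C)"
  shows "x0 = []"
proof (rule ccontr)
  assume "x0 \<noteq> []"
  then obtain ys q where x0: "x0 = ys @ [q]" by (metis rev_exhaust)
  have "Suc (length ys) < length (x0 @ a # b # M)" by (simp add: x0)
  then have "adjacent ((x0 @ a # b # M) ! length ys) ((x0 @ a # b # M) ! Suc (length ys))"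
    using L unfolding path_ok_def by blast
  then have "adjacent q a" by (simp add: x0 nth_append)
  then have "adjacent a q" by (rule adjacent_sym)
  then have "q \<in> set (a # b # C)" using nbrs x0 by simp
  then obtain m where m: "m < length (a # b # C)" "(a # b # C) ! m = q"
    by (metis in_set_conv_nth)
  with \<open>adjacent a q\<close> have "m = 1"
    using path_ok_adjacent_nth[OF C, of 0 m] by auto
  then have "q = b" using m by simp
  moreover have "distinct (x0 @ a # b # M)" using L unfolding path_ok_def by blast
  ultimately show False by (simp add: x0)
qed

lemma path_ok_endpoint_no_successor:
  assumes "path_ok (M @ b # a # x1)" "path_ok (C @ [b, a])"
    and "\<And>q. adjacent a q \<Longrightarrow> q \<in> set (M @ b # a # x1) \<Longrightarrow> q \<in> set (C @ [b, a])"
  shows "x1 = []"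
proof -
  have L: "path_ok (rev x1 @ a # b # rev M)"
    using assms(1) path_ok_rev[of "M @ b # a # x1"] by simp
  have C: "path_ok (a # b # rev C)"
    using assms(2) path_ok_rev[of "C @ [b, a]"] by simp
  have "rev x1 = []"
    by (rule path_ok_endpoint_no_predecessor[OF L C]) (use assms(3) in auto)
  then show ?thesis by simp
qed

lemma bc_append_left:
  assumes "path_ok (A @ B)" "0 < c" "c < length B"
  shows "bc (set (A @ B)) (B ! c) = bc (set B) (B ! c)"
proof -
  have "padd (B ! c) (eps k) \<notin> set A" if "k < 4" for k
  proof
    assume "padd (B ! c) (eps k) \<in> set A"
    then obtain n where n: "n < length A" "A ! n = padd (B ! c) (eps k)"
      by (metis in_set_conv_nth)
    have "adjacent (B ! c) (A ! n)"
      using n(2) that unfolding adjacent_def by blast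
    then have "adjacent ((A @ B) ! (length A + c)) ((A @ B) ! n)"
      using n(1) by (simp add: nth_append_left)
    then have "length A + c = Suc n \<or> n = Suc (length A + c)"
      using path_ok_adjacent_nth[OF assms(1), of "length A + c" n] n(1) assms(3) by simp
    then show False using n(1) assms(2) by linarith
  qed
  then show ?thesis unfolding bc_def by (intro map_cong) auto
qed

lemma seg_Cons: "i \<le> j \<Longrightarrow> seg p i j = p i # seg p (i + 1) j"
  unfolding seg_def by (simp add: upto_rec1)

lemma seg_snoc: "i \<le> j \<Longrightarrow> seg p i j = seg p i (j - 1) @ [p j]"
  unfolding seg_def by (simp add: upto_rec2)

lemma seg_split:
  assumes "i' \<le> i" "i \<le> j" "j \<le> j'"
  shows "seg p i' j' = seg p i' (i - 1) @ seg p i j @ seg p (j + 1) j'"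
proof -
  have "[i'..j'] = [i'..i - 1] @ [i..j']" using assms by (intro upto_split1) auto
  also have "[i..j'] = [i..j] @ [j + 1..j']" using assms by (intro upto_split2) auto
  finally show ?thesis unfolding seg_def by simp
qed

lemma NI_iff:
  "NI r s p i j \<longleftrightarrow>
     (\<forall>x0 x1 y0 y1. (x0, x1) \<in> W r s p i j \<longrightarrow> (y0, y1) \<in> W r s p i j \<longrightarrow> (x0, y1) \<in> W r s p i j)"
  unfolding NI_def U_def V_def by force

lemma W_restrict:
  assumes "(x0, x1) \<in> W r s p i' j'" "i' \<le> i" "i \<le> j" "j \<le> j'"
  shows "(x0 @ seg p i' (i - 1), seg p (j + 1) j' @ x1) \<in> W r s p i j"
  using assms seg_split[OF assms(2-4), of p] unfolding W_def by (auto simp: Un_assoc)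

lemma W_left_end_Nil:
  assumes C: "path_ok (seg p r s)" and "r < j" "j \<le> s" and x: "(x0, x1) \<in> W r s p r j"
  shows "x0 = []"
proof (rule path_ok_endpoint_no_predecessor)
  have "seg p r j = p r # p (r + 1) # seg p (r + 2) j" and
    "seg p r s = p r # p (r + 1) # seg p (r + 2) s"
    using \<open>r < j\<close> \<open>j \<le> s\<close> by (simp_all add: seg_Cons add.assoc)
  moreover have "path_ok (x0 @ seg p r j @ x1)"
    and bc: "bc (set (x0 @ seg p r j @ x1)) (p r) = bc (set (seg p r s)) (p r)"
    using x \<open>r < j\<close> unfolding W_def by auto
  ultimately show "path_ok (x0 @ p r # p (r + 1) # seg p (r + 2) j @ x1)"
    and "path_ok (p r # p (r + 1) # seg p (r + 2) s)"
    and "\<And>q. adjacent (p r) q \<Longrightarrow> q \<in> set (x0 @ p r # p (r + 1) # seg p (r + 2) j @ x1) \<Longrightarrow>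
           q \<in> set (p r # p (r + 1) # seg p (r + 2) s)"
    using C bc_eq_neighbour_mem[OF bc] by auto
qed

lemma W_right_end_Nil:
  assumes C: "path_ok (seg p r s)" and "r \<le> i" "i < s" and x: "(x0, x1) \<in> W r s p i s"
  shows "x1 = []"
proof (rule path_ok_endpoint_no_successor)
  have "seg p i s = seg p i (s - 2) @ [p (s - 1), p s]" and
    "seg p r s = seg p r (s - 2) @ [p (s - 1), p s]"
    using \<open>r \<le> i\<close> \<open>i < s\<close> by (simp_all add: seg_snoc[of _ s] seg_snoc[of _ "s - 1"] diff_diff_eq)
  moreover have "path_ok (x0 @ seg p i s @ x1)"
    and bc: "bc (set (x0 @ seg p i s @ x1)) (p s) = bc (set (seg p r s)) (p s)"
    using x \<open>i < s\<close> unfolding W_def by auto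
  ultimately show "path_ok ((x0 @ seg p i (s - 2)) @ p (s - 1) # p s # x1)"
    and "path_ok (seg p r (s - 2) @ [p (s - 1), p s])"
    and "\<And>q. adjacent (p s) q \<Longrightarrow> q \<in> set ((x0 @ seg p i (s - 2)) @ p (s - 1) # p s # x1) \<Longrightarrow>
           q \<in> set (seg p r (s - 2) @ [p (s - 1), p s])"
    using C bc_eq_neighbour_mem[OF bc] by auto
qed

lemma finite_W_full:
  assumes "path_ok (seg p r s)" "r < s"
  shows "finite (W r s p r s)"
proof (rule finite_subset)
  show "W r s p r s \<subseteq> {([], [])}"
    using W_left_end_Nil[OF assms(1,2)] W_right_end_Nil[OF assms(1) _ assms(2)] by fastforce
qed simp

lemma NI_left_end:
  assumes "path_ok (seg p r s)" "r < j" "j \<le> s"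
  shows "NI r s p r j"
  using W_left_end_Nil[OF assms] unfolding NI_iff by blast

lemma f_less_infinity_if_finite_W:
  assumes "finite (W r s p i j)"
  shows "f r s p i j < \<infinity>"
proof -
  define n where "n = Max (length ` U r s p i j)"
  have "finite (U r s p i j)" using assms unfolding U_def by simp
  then have "length x \<le> n" if "x \<in> U r s p i j" for x
    using that unfolding n_def by simp
  then have "f r s p i j \<le> enat n" unfolding f_def by (auto intro: Sup_least)
  then show ?thesis using enat_ord_simps(4) order_le_less_trans by blast
qed

lemma infinite_W_restrict:
  assumes "infinite (W r s p i' j')" "i' \<le> i" "i \<le> j" "j \<le> j'"
  shows "infinite (W r s p i j)"
proof
  assume "finite (W r s p i j)"
  define h where "h = (\<lambda>(x0, x1). (x0 @ seg p i' (i - 1), seg p (j + 1) j' @ x1))"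
  have "h ` W r s p i' j' \<subseteq> W r s p i j"
    using W_restrict[OF _ assms(2-4)] unfolding h_def by auto
  moreover have "inj_on h (W r s p i' j')" unfolding h_def inj_on_def by auto
  ultimately have "finite (W r s p i' j')"
    using \<open>finite (W r s p i j)\<close> finite_subset finite_imageD by metis
  then show False using assms(1) by contradiction
qed

lemma left_free_infinite_W:
  assumes "left_free r s p" "r < 0" "r + 1 \<le> i" "i \<le> j" "j \<le> s"
  shows "infinite (W r s p i j)"
proof (rule infinite_W_restrict[OF _ assms(3-5)])
  show "infinite (W r s p (r + 1) s)"
    using assms(1,2) f_less_infinity_if_finite_W unfolding left_free_def by fastforce
qed

lemma NI_extend_right:
  assumes NI: "NI r s p i j0" and "i \<le> j0" "j0 \<le> j"
  shows "NI r s p i j"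
  unfolding NI_iff
proof (intro allI impI)
  fix x0 x1 y0 y1
  assume x: "(x0, x1) \<in> W r s p i j" and y: "(y0, y1) \<in> W r s p i j"
  let ?T = "seg p (j0 + 1) j"
  let ?B = "seg p i j @ y1"
  have "(x0, ?T @ x1) \<in> W r s p i j0" "(y0, ?T @ y1) \<in> W r s p i j0"
    using W_restrict[OF x, of i j0] W_restrict[OF y, of i j0] assms(2,3) by (simp_all add: seg_def)
  then have "(x0, ?T @ y1) \<in> W r s p i j0" using NI unfolding NI_iff by blast
  moreover have seg: "seg p i j = seg p i j0 @ ?T"
    using seg_split[of i i j0 j p] assms(2,3) by (simp add: seg_def)
  ultimately have path: "path_ok (x0 @ ?B)"
    and bc_left: "\<forall>l\<in>{i..j0}. bc (set (x0 @ ?B)) (p l) = bc (set (seg p r s)) (p l)"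
    unfolding W_def by auto
  have "bc (set (x0 @ ?B)) (p l) = bc (set (seg p r s)) (p l)" if "j0 < l" "l \<le> j" for l
  proof -
    define c where "c = nat (l - i)"
    have c: "0 < c" "c < length ?B" "?B ! c = p l"
      using that assms(2) unfolding c_def by (auto simp: seg_def nth_append)
    have "path_ok (y0 @ ?B)"
      and "bc (set (y0 @ ?B)) (p l) = bc (set (seg p r s)) (p l)"
      using y that assms(2) unfolding W_def by auto
    then show ?thesis
      using bc_append_left[OF path c(1,2)] bc_append_left[of y0 ?B c] c by simp
  qed
  with bc_left have "\<forall>l\<in>{i..j}. bc (set (x0 @ ?B)) (p l) = bc (set (seg p r s)) (p l)"
    by (meson atLeastAtMost_iff not_le)
  then show "(x0, y1) \<in> W r s p i j" using path unfolding W_def by simp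
qed

lemma CNI_pairs_left_free:
  assumes "left_free r s p" "r < 0" "(i, j) \<in> Iset r s p \<union> Jset r s p \<union> Kset r s p" "i \<noteq> r"
  shows "i = r + 1 \<and> finite (W r s p r j)"
proof -
  have bounds: "r + 1 \<le> i" "i \<le> 0" "0 \<le> j" "j \<le> s"
    using assms(3,4) unfolding Iset_def Jset_def Kset_def by auto
  have "(i, j) \<notin> Kset r s p"
    using left_free_infinite_W[OF assms(1,2)] bounds unfolding Kset_def by auto
  moreover have "(i, j) \<notin> Jset r s p"
    using left_free_infinite_W[OF assms(1,2), of i "j + 1"] bounds unfolding Jset_def by auto
  ultimately have I: "r \<le> i - 1" "finite (W r s p (i - 1) j)"
    using assms(3) unfolding Iset_def by auto
  then have "i - 1 = r"
    using left_free_infinite_W[OF assms(1,2), of "i - 1" j] bounds by fastforce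
  then show ?thesis using I by auto
qed

lemma CNI_iff_NI_left_free:
  assumes "config r s p" "left_free r s p" "r < 0"
    and j0: "0 \<le> j0" "j0 \<le> s" "finite (W r s p r j0)"
    and j0_least: "\<And>j. 0 \<le> j \<Longrightarrow> j \<le> s \<Longrightarrow> finite (W r s p r j) \<Longrightarrow> j0 \<le> j"
  shows "CNI r s p \<longleftrightarrow> NI r s p (r + 1) j0"
proof
  assume "CNI r s p"
  moreover have "(r + 1, j0) \<in> Iset r s p"
    using j0 assms(3) left_free_infinite_W[OF assms(2,3)] unfolding Iset_def by auto
  ultimately show "NI r s p (r + 1) j0" unfolding CNI_def by auto
next
  assume NI: "NI r s p (r + 1) j0"
  have C: "path_ok (seg p r s)" using assms(1) unfolding config_def by simp
  show "CNI r s p" unfolding CNI_def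
  proof clarify
    fix i j assume ij: "(i, j) \<in> Iset r s p \<union> Jset r s p \<union> Kset r s p"
    then have j: "0 \<le> j" "j \<le> s" unfolding Iset_def Jset_def Kset_def by auto
    show "NI r s p i j"
    proof (cases "i = r")
      case True
      then show ?thesis using NI_left_end[OF C] j assms(3) by simp
    next
      case False
      then have "i = r + 1" "j0 \<le> j"
        using CNI_pairs_left_free[OF assms(2,3) ij] j0_least j by auto
      then show ?thesis using NI_extend_right[OF NI] j0 assms(3) by simp
    qed
  qed
qed

theorem theorem11:
  fixes r s :: int and p :: "int \<Rightarrow> int \<times> int"
  assumes "config r s p"
    and "type_II r s p"
    and "left_free r s p"
    and "r < 0"
  shows "CNI r s p \<longleftrightarrow>
           NI r s p (r + 1) (LEAST j. 0 \<le> j \<and> j \<le> s \<and> finite (W r s p r j))"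
proof -
  let ?P = "\<lambda>j. 0 \<le> j \<and> j \<le> s \<and> finite (W r s p r j)"
  have "path_ok (seg p r s)" "0 \<le> s" using assms(1) unfolding config_def by auto
  then have "?P s" using finite_W_full assms(4) by simp
  then have "?P (LEAST j. ?P j)" and "\<And>j. ?P j \<Longrightarrow> (LEAST j. ?P j) \<le> j"
    using Least_int_bounded_below[of ?P s 0] by auto
  then show ?thesis using CNI_iff_NI_left_free[OF assms(1,3,4)] by simp
qed

end
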